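(* Let $d\ge 2$ and let $P_n\subset\mathbb{R}^d$ be a $d$-dimensional simplicial polytope whose vertices $x_1,\dots,x_n$ all lie on $\partial B_2^d$. Let $F_j$, $j=1,\dots,m$, be the $(d-1)$-dimensional faces of $P_n$, $H_j$ the hyperplane containing $F_j$, $H_j^-$ the closed halfspace bounded by $H_j$ not containing $P_n$ (i.e. opposite to the halfspace $H_j^+$ containing $P_n$), and $h_j$ the height of the cap $B_2^d\cap H_j^-$. Let $\mathcal N$ be the set of indices $j$ with $$h_j\le \frac18\Big(\frac{\mathrm{vol}_{d-1}(\partial P_n)}{\mathrm{vol}_{d-1}(\partial B_2^d)}\cdot\frac1{4n}\Big)^{\frac2{d-1}}.$$ Then $$\mathrm{vol}_{d-1}\Big(\bigcup_{j\in\mathcal N}F_j\Big)\le\frac14\,\mathrm{vol}_{d-1}(\partial P_n).$$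
   Context: $B_2^d$ is the closed Euclidean unit ball, $\partial B_2^d$ the unit sphere, $\mathrm{vol}_{d-1}$ the $(d-1)$-dimensional surface measure. The height of the cap $B_2^d\cap H_j^-$ is its width in the direction normal to $H_j$, i.e. the maximal distance from a point of $B_2^d\cap H_j^-$ to $H_j$. *)

theory Defs
  imports "HOL-Analysis.Analysis"
begin

text \<open>(d-1)-dimensional volume of a set F lying in an affine hyperplane:
  the d-dimensional Lebesgue measure of the right prism of height 1 over F
  in the direction of a unit normal u of the hyperplane.\<close>
definition flat_area :: "'a::euclidean_space set \<Rightarrow> real" where
  "flat_area F =
     (let u = (SOME u. norm u = 1 \<and> (\<forall>x\<in>F. \<forall>y\<in>F. u \<bullet> (x - y) = 0))
      in measure lebesgue {x + t *\<^sub>R u | x t. x \<in> F \<and> t \<in> {0..1}})"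

definition polytope_surface_area :: "'a::euclidean_space set \<Rightarrow> real" where
  "polytope_surface_area P = (\<Sum>F\<in>{F. F facet_of P}. flat_area F)"

text \<open>Surface area of the unit sphere, defined as the Minkowski content of the unit ball.\<close>
definition sphere_area :: "'a::euclidean_space itself \<Rightarrow> real" where
  "sphere_area TYPE('a) =
     Lim (at_right 0) (\<lambda>e. (measure lebesgue (cball (0::'a) (1 + e)) - measure lebesgue (cball (0::'a) 1)) / e)"

definition outer_halfspace :: "'a::euclidean_space set \<Rightarrow> 'a set \<Rightarrow> 'a set" where
  "outer_halfspace P F = {x. \<exists>u b. u \<noteq> 0 \<and> affine hull F = {y. u \<bullet> y = b}
        \<and> P \<subseteq> {y. u \<bullet> y \<le> b} \<and> u \<bullet> x \<ge> b}"

definition cap_height :: "'a::euclidean_space set \<Rightarrow> 'a set \<Rightarrow> real" where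
  "cap_height P F = Sup {infdist x (affine hull F) | x. x \<in> cball 0 1 \<inter> outer_halfspace P F}"

end

theory Submission
  imports Defs
begin

(* Write S for the surface area of P, \<omega> for that of the unit sphere, n = card X, and choose t
   with sqrt (8 t) ^ (d - 1) = S / (4 n \<omega>). A facet with outer unit normal \<nu> in the hyperplane
   \<nu> \<bullet> z = b has cap height at least 1 - b, so a facet of cap height at most t through the vertex
   x has \<nu> \<bullet> x \<ge> 7/8 and lies within distance sqrt (8 t) of x.
   Sweeping the facets with \<nu> \<bullet> e > 0 in direction e gives essentially disjoint prisms of volume
   T (\<nu> \<bullet> e) area F; letting the height T grow inside a cylinder with axis e bounds
   \<Sum> (\<nu> \<bullet> e) area F by the area of the base disc. For e = x this bounds the area of the
   small-cap facets at x by twice the area of a (d-1)-disc of radius sqrt (8 t), hence by S / (4 n);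
   every facet has a vertex, so summing over the n vertices gives S / 4. With e = \<plusminus>b for the
   basis vectors b the same bound gives S \<le> d \<omega> \<le> n \<omega>, which guarantees t \<le> 1/8. *)

section \<open>Lebesgue measure of linear images in Euclidean spaces\<close>

text \<open>The Jacobian formula for linear maps is available only on \<open>real^'n\<close>; it is transported to
  an arbitrary Euclidean space along the coordinate isometry indexed by its basis. The formula is
  stated for index types in class \<open>wellorder\<close>, and any order will do.\<close>

typedef (overloaded) ('a::euclidean_space) basis_index = "Basis :: 'a set"
  using nonempty_Basis by blast

instance basis_index :: (euclidean_space) finite
proof
  show "finite (UNIV :: 'a basis_index set)"
    by (simp flip: type_definition.Abs_image[OF type_definition_basis_index])
qed

instantiation basis_index :: (euclidean_space) linorder
begin

definition less_eq_basis_index :: "'a basis_index \<Rightarrow> 'a basis_index \<Rightarrow> bool"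
  where "(i::'a basis_index) \<le> j \<longleftrightarrow> to_nat i \<le> to_nat j"

definition less_basis_index :: "'a basis_index \<Rightarrow> 'a basis_index \<Rightarrow> bool"
  where "(i::'a basis_index) < j \<longleftrightarrow> to_nat i < to_nat j"

instance
proof
  fix i j k :: "'a basis_index"
  show "i < j \<longleftrightarrow> i \<le> j \<and> \<not> j \<le> i"
    by (auto simp: less_eq_basis_index_def less_basis_index_def)
  show "i \<le> i"
    by (simp add: less_eq_basis_index_def)
  show "i \<le> j \<Longrightarrow> j \<le> k \<Longrightarrow> i \<le> k"
    unfolding less_eq_basis_index_def by (rule order_trans)
  show "i \<le> j \<Longrightarrow> j \<le> i \<Longrightarrow> i = j"
    unfolding less_eq_basis_index_def by (simp add: inj_eq[OF inj_to_nat])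
  show "i \<le> j \<or> j \<le> i"
    unfolding less_eq_basis_index_def by (rule nat_le_linear)
qed

end

instance basis_index :: (euclidean_space) wellorder
proof
  fix P :: "'a::euclidean_space basis_index \<Rightarrow> bool" and a
  assume step: "\<And>i. (\<And>j. j < i \<Longrightarrow> P j) \<Longrightarrow> P i"
  show "P a"
    by (induct a rule: measure_induct_rule[of to_nat]) (rule step, simp add: less_basis_index_def)
qed

definition coords :: "'a::euclidean_space \<Rightarrow> real^'a basis_index" where
  "coords z = (\<chi> i. z \<bullet> Rep_basis_index i)"

definition of_coords :: "real^'a basis_index \<Rightarrow> 'a::euclidean_space" where
  "of_coords v = (\<Sum>i\<in>UNIV. v $ i *\<^sub>R Rep_basis_index i)"

lemma bij_betw_Rep_basis_index: "bij_betw Rep_basis_index UNIV (Basis :: 'a::euclidean_space set)"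
  by (metis Rep_basis_index_inject bij_betw_def inj_onI type_definition.Rep_range type_definition_basis_index)

lemma sum_basis_index: "(\<Sum>i\<in>UNIV. f (Rep_basis_index i)) = (\<Sum>b\<in>(Basis :: 'a::euclidean_space set). f b)"
  using sum.reindex_bij_betw[OF bij_betw_Rep_basis_index] by simp

lemma prod_basis_index: "(\<Prod>i\<in>UNIV. f (Rep_basis_index i)) = (\<Prod>b\<in>(Basis :: 'a::euclidean_space set). f b)"
  using prod.reindex_bij_betw[OF bij_betw_Rep_basis_index] by simp

lemma ball_Basis_basis_index: "(\<forall>b\<in>(Basis :: 'a::euclidean_space set). Q b) \<longleftrightarrow> (\<forall>i. Q (Rep_basis_index i))"
  by (simp add: type_definition.Rep_range[OF type_definition_basis_index, symmetric])

lemma of_coords_inner_Rep: "of_coords v \<bullet> Rep_basis_index j = v $ j"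
proof -
  have "of_coords v \<bullet> Rep_basis_index j = (\<Sum>i\<in>UNIV. if i = j then v $ i else 0)"
    unfolding of_coords_def inner_sum_left
    by (rule sum.cong) (auto simp: inner_Basis Rep_basis_index Rep_basis_index_inject)
  then show ?thesis by simp
qed

lemma coords_of_coords [simp]: "coords (of_coords v) = v"
  by (simp add: coords_def of_coords_inner_Rep vec_eq_iff)

lemma of_coords_coords [simp]: "of_coords (coords z) = z"
  using sum_basis_index[of "\<lambda>b. (z \<bullet> b) *\<^sub>R b"]
  by (simp add: of_coords_def coords_def euclidean_representation)

lemma linear_coords: "linear coords"
  unfolding coords_def by (auto intro!: linearI simp: vec_eq_iff inner_add_left)

lemma linear_of_coords: "linear of_coords"
  unfolding of_coords_def
  by (auto intro!: linearI simp: scaleR_add_left sum.distrib scaleR_sum_right)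

lemma bounded_linear_of_coords: "bounded_linear of_coords"
  using linear_of_coords linear_conv_bounded_linear by blast

lemma inner_coords [simp]: "coords z \<bullet> coords w = z \<bullet> w"
  using sum_basis_index[of "\<lambda>b. (z \<bullet> b) * (w \<bullet> b)"]
  by (simp add: coords_def inner_vec_def euclidean_inner[of z w])

lemma lborel_distr_of_coords: "distr lborel borel of_coords = (lborel :: 'a::euclidean_space measure)"
proof (rule lborel_eqI[symmetric])
  fix l u :: 'a
  assume le: "\<And>b. b \<in> Basis \<Longrightarrow> l \<bullet> b \<le> u \<bullet> b"
  have pre: "of_coords -` box l u = box (coords l) (coords u)"
  proof -
    have "of_coords x \<in> box l u \<longleftrightarrow> x \<in> box (coords l) (coords u)" for x
    proof -
      have "of_coords x \<in> box l u \<longleftrightarrow>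
          (\<forall>i. l \<bullet> Rep_basis_index i < x $ i \<and> x $ i < u \<bullet> Rep_basis_index i)"
        by (simp only: mem_box ball_Basis_basis_index of_coords_inner_Rep)
      then show ?thesis by (simp add: mem_box_cart coords_def)
    qed
    then show ?thesis by blast
  qed
  have "emeasure (distr lborel borel of_coords) (box l u) = emeasure lborel (box (coords l) (coords u))"
    using borel_measurable_continuous_onI[OF linear_continuous_on[OF bounded_linear_of_coords]]
    by (subst emeasure_distr) (auto simp: pre)
  also have "\<dots> = (\<Prod>i\<in>UNIV. (u - l) \<bullet> Rep_basis_index i)"
    using le Rep_basis_index
    by (simp add: emeasure_lborel_box_eq Basis_vec_def cart_eq_inner_axis[symmetric] axis_eq_axis
        prod.UNION_disjoint coords_def inner_diff_left) blast
  finally show "emeasure (distr lborel borel of_coords) (box l u) = (\<Prod>b\<in>Basis. (u - l) \<bullet> b)"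
    by (simp add: prod_basis_index)
qed simp

lemma measure_coords_image:
  fixes S :: "'a::euclidean_space set"
  assumes "S \<in> sets borel"
  shows "measure lebesgue (coords ` S) = measure lebesgue S"
proof -
  have meas: "of_coords \<in> borel_measurable borel"
    by (rule borel_measurable_continuous_onI[OF linear_continuous_on[OF bounded_linear_of_coords]])
  have pre: "coords ` S = of_coords -` S"
    by (auto simp: image_iff) (metis coords_of_coords)
  have "measure lebesgue (coords ` S) = measure lborel (of_coords -` S)"
    using measurable_sets_borel[OF meas assms] by (simp add: pre)
  also have "\<dots> = measure (distr lborel borel of_coords) S"
    using meas assms by (subst measure_distr) auto
  finally show ?thesis
    using assms by (simp add: lborel_distr_of_coords)
qed

lemma measure_linear_image_euclidean:
  fixes f :: "'a::euclidean_space \<Rightarrow> 'a"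
  assumes "linear f" "compact S"
  shows "measure lebesgue (f ` S) = \<bar>det (matrix (coords \<circ> f \<circ> of_coords))\<bar> * measure lebesgue S"
proof -
  have compact_image: "compact (g ` S)" if "linear g" for g :: "'a \<Rightarrow> 'b::euclidean_space"
    using that assms(2) by (intro compact_continuous_image linear_continuous_on)
      (simp add: linear_conv_bounded_linear[symmetric])
  have measure_coords: "measure lebesgue (coords ` T) = measure lebesgue T" if "compact T" for T :: "'a set"
    using that by (intro measure_coords_image borel_closed compact_imp_closed)
  have "coords ` f ` S = (coords \<circ> f \<circ> of_coords) ` coords ` S"
    by (auto simp: image_iff)
  then have "measure lebesgue (coords ` f ` S) =
      \<bar>det (matrix (coords \<circ> f \<circ> of_coords))\<bar> * measure lebesgue (coords ` S)"
    using compact_image[OF linear_coords] assms(1)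
    by (simp only:) (intro measure_linear_image linear_compose linear_coords linear_of_coords lmeasurable_compact)
  then show ?thesis
    by (simp only: measure_coords compact_image assms)
qed

lemma det_identity_plus_rank_one:
  fixes p q :: "real^'n"
  shows "det (matrix (\<lambda>v. v + (v \<bullet> p) *\<^sub>R q)) = 1 + q \<bullet> p"
proof (cases "p = 0")
  case True
  then show ?thesis by (simp add: matrix_id_mat_1 flip: id_def)
next
  case False
  \<comment> \<open>After rotating \<open>p\<close> onto an axis only one column differs from the identity matrix.\<close>
  fix k :: 'n
  obtain Q :: "real^'n \<Rightarrow> real^'n" where Q: "orthogonal_transformation Q" "Q (axis k 1) = p /\<^sub>R norm p"
    using orthogonal_transformation_exists_1[of "axis k 1" "p /\<^sub>R norm p"] False by auto
  obtain w where w: "Q w = q"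
    using orthogonal_transformation_surj[OF Q(1)] by (metis surjD)
  have linQ: "linear Q" and innQ: "\<And>v v'. Q v \<bullet> Q v' = v \<bullet> v'"
    using Q(1) by (auto simp: orthogonal_transformation_def)
  have p: "p = norm p *\<^sub>R Q (axis k 1)" using Q(2) False by simp
  define N where "N = (\<lambda>v::real^'n. v + (v \<bullet> p) *\<^sub>R q)"
  define A where "A = (\<lambda>v::real^'n. v + (norm p * v $ k) *\<^sub>R w)"
  have linN: "linear N" and linA: "linear A"
    by (auto intro!: linearI simp: N_def A_def algebra_simps)
  have "Q \<circ> A = N \<circ> Q"
  proof
    fix v
    have "Q v \<bullet> p = norm p * v $ k"
      by (subst p) (simp add: innQ inner_axis)
    then show "(Q \<circ> A) v = (N \<circ> Q) v"
      by (simp add: A_def N_def linear_add[OF linQ] linear_scale[OF linQ] w)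
  qed
  then have "det (matrix Q) * det (matrix A) = det (matrix N) * det (matrix Q)"
    by (metis det_mul matrix_compose linA linN linQ)
  then have "det (matrix N) = det (matrix A)"
    using orthogonal_transformation_det[OF Q(1)] by auto
  also have "matrix A = (\<chi> i j. if j = k then (mat 1 *v (axis k 1 + norm p *\<^sub>R w)) $ i else mat 1 $ i $ j)"
    by (simp add: vec_eq_iff matrix_def A_def axis_def) (simp add: mat_def)
  also have "det \<dots> = 1 + norm p * w $ k"
    by (subst cramer_lemma) simp
  also have "norm p * w $ k = q \<bullet> p"
    by (subst p, subst w[symmetric]) (simp add: innQ inner_axis)
  finally show ?thesis by (simp add: N_def)
qed

lemma measure_rank_one_image:
  fixes p q :: "'a::euclidean_space"
  assumes "compact S"
  shows "measure lebesgue ((\<lambda>w. w + (w \<bullet> p) *\<^sub>R q) ` S) = \<bar>1 + q \<bullet> p\<bar> * measure lebesgue S"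
proof -
  have lin: "linear (\<lambda>w. w + (w \<bullet> p) *\<^sub>R q)"
    by (auto intro!: linearI simp: algebra_simps)
  have "coords \<circ> (\<lambda>w. w + (w \<bullet> p) *\<^sub>R q) \<circ> of_coords = (\<lambda>v. v + (v \<bullet> coords p) *\<^sub>R coords q)"
  proof
    fix v
    have "of_coords v \<bullet> p = v \<bullet> coords p"
      by (metis inner_coords coords_of_coords)
    then show "(coords \<circ> (\<lambda>w. w + (w \<bullet> p) *\<^sub>R q) \<circ> of_coords) v = v + (v \<bullet> coords p) *\<^sub>R coords q"
      by (simp add: linear_add[OF linear_coords] linear_scale[OF linear_coords])
  qed
  then show ?thesis
    using measure_linear_image_euclidean[OF lin assms] det_identity_plus_rank_one[of "coords p" "coords q"]
    by simp
qed

section \<open>Prisms and cylinders\<close>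

lemma flat_area_nonneg: "0 \<le> flat_area F"
  by (simp add: flat_area_def Let_def)

definition prism :: "'a::euclidean_space set \<Rightarrow> 'a \<Rightarrow> real \<Rightarrow> 'a set" where
  "prism F v T = (\<lambda>(y, t). y + t *\<^sub>R v) ` (F \<times> {0..T})"

lemma mem_prism: "z \<in> prism F v T \<longleftrightarrow> (\<exists>y t. y \<in> F \<and> 0 \<le> t \<and> t \<le> T \<and> z = y + t *\<^sub>R v)"
  unfolding prism_def by force

lemma compact_prism: "compact F \<Longrightarrow> compact (prism F v T)"
  unfolding prism_def
  by (intro compact_continuous_image compact_Times compact_Icc)
    (simp_all add: case_prod_unfold continuous_on_add continuous_on_scaleR continuous_on_fst continuous_on_snd)

lemma prism_uminus: "prism F (- v) 1 = (+) (- v) ` prism F v 1"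
proof (intro set_eqI iffI)
  fix z assume "z \<in> prism F (- v) 1"
  then obtain y t where "y \<in> F" "0 \<le> t" "t \<le> 1" "z = y + t *\<^sub>R (- v)"
    by (auto simp: mem_prism)
  then have "y + (1 - t) *\<^sub>R v \<in> prism F v 1" "z = - v + (y + (1 - t) *\<^sub>R v)"
    unfolding mem_prism by (auto intro!: exI[of _ y] exI[of _ "1 - t"] simp: algebra_simps)
  then show "z \<in> (+) (- v) ` prism F v 1" by blast
next
  fix z assume "z \<in> (+) (- v) ` prism F v 1"
  then obtain y t where "y \<in> F" "0 \<le> t" "t \<le> 1" "z = - v + (y + t *\<^sub>R v)"
    by (auto simp: mem_prism)
  then show "z \<in> prism F (- v) 1"
    unfolding mem_prism by (intro exI[of _ y] exI[of _ "1 - t"]) (auto simp: algebra_simps)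
qed

lemma measure_prism_oblique:
  fixes F :: "'a::euclidean_space set"
  assumes "compact F" "F \<subseteq> {z. u \<bullet> z = b}" "norm u = 1" "T > 0"
  shows "measure lebesgue (prism F e T) = \<bar>T * (u \<bullet> e)\<bar> * measure lebesgue (prism F u 1)"
proof -
  \<comment> \<open>A rank-one map sends the right prism of height 1 onto a translate of the oblique one.\<close>
  define q where "q = T *\<^sub>R e - u"
  define M where "M = (\<lambda>w. w + (w \<bullet> u) *\<^sub>R q)"
  have uu: "u \<bullet> u = 1" using assms(3) by (simp add: norm_eq_1)
  have M: "M (y + t *\<^sub>R u) = b *\<^sub>R q + (y + (t * T) *\<^sub>R e)" if "y \<in> F" for y t
    using that assms(2) by (auto simp: M_def q_def inner_commute uu algebra_simps)
  have "M ` prism F u 1 = (+) (b *\<^sub>R q) ` prism F e T"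
  proof (intro set_eqI iffI)
    fix z assume "z \<in> M ` prism F u 1"
    then obtain y t where "y \<in> F" "0 \<le> t" "t \<le> 1" "z = M (y + t *\<^sub>R u)"
      by (auto simp: mem_prism)
    then have "y + (t * T) *\<^sub>R e \<in> prism F e T" "z = b *\<^sub>R q + (y + (t * T) *\<^sub>R e)"
      using assms(4) M unfolding mem_prism by (auto intro!: exI[of _ "t * T"] simp: mult_le_cancel_right1)
    then show "z \<in> (+) (b *\<^sub>R q) ` prism F e T" by blast
  next
    fix z assume "z \<in> (+) (b *\<^sub>R q) ` prism F e T"
    then obtain y t where "y \<in> F" "0 \<le> t" "t \<le> T" "z = b *\<^sub>R q + (y + t *\<^sub>R e)"
      by (auto simp: mem_prism)
    then have "y + (t / T) *\<^sub>R u \<in> prism F u 1" "z = M (y + (t / T) *\<^sub>R u)"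
      using assms(4) M unfolding mem_prism by (auto intro!: exI[of _ y] exI[of _ "t / T"])
    then show "z \<in> M ` prism F u 1" by blast
  qed
  then have "measure lebesgue (prism F e T) = measure lebesgue (M ` prism F u 1)"
    by (simp add: measure_translation)
  also have "\<dots> = \<bar>1 + q \<bullet> u\<bar> * measure lebesgue (prism F u 1)"
    unfolding M_def by (rule measure_rank_one_image[OF compact_prism[OF assms(1)]])
  also have "1 + q \<bullet> u = T * (u \<bullet> e)"
    by (simp add: q_def inner_diff_left uu inner_commute[of e u])
  finally show ?thesis .
qed

lemma affine_hull_eq_hyperplane:
  fixes F :: "'a::euclidean_space set"
  assumes "F \<noteq> {}" "F \<subseteq> {z. u \<bullet> z = b}" "u \<noteq> 0" "aff_dim F = int DIM('a) - 1"
  shows "affine hull F = {z. u \<bullet> z = b}"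
proof (rule affine_dim_equal)
  show "affine hull F \<subseteq> {z. u \<bullet> z = b}"
    using assms(2) by (intro hull_minimal) (auto simp: affine_hyperplane)
qed (use assms affine_hyperplane in auto)

lemma unit_normal_eq_or_uminus:
  fixes F :: "'a::euclidean_space set"
  assumes "affine hull F = {z. u \<bullet> z = b}" "norm u = 1"
    and "norm u' = 1" "\<And>x y. x \<in> F \<Longrightarrow> y \<in> F \<Longrightarrow> u' \<bullet> (x - y) = 0"
  shows "u' = u \<or> u' = - u"
proof -
  have uu: "u \<bullet> u = 1" using assms(2) by (simp add: norm_eq_1)
  obtain y0 where y0: "y0 \<in> F"
    using assms(1,2) by (metis affine_hull_empty all_not_in_conv hyperplane_eq_empty norm_zero zero_neq_one)
  have "F \<subseteq> {z. u' \<bullet> z = u' \<bullet> y0}"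
    using assms(4)[OF _ y0] by (auto simp: inner_diff_right)
  then have hull: "affine hull F \<subseteq> {z. u' \<bullet> z = u' \<bullet> y0}"
    by (intro hull_minimal) (auto simp: affine_hyperplane)
  define c where "c = u' \<bullet> u"
  define w where "w = u' - c *\<^sub>R u"
  have uw: "u \<bullet> w = 0"
    by (simp add: w_def c_def inner_diff_right uu inner_commute)
  have "u \<bullet> y0 = b"
    using hull_inc[OF y0] assms(1) by auto
  then have "y0 + w \<in> affine hull F"
    using uw by (simp add: assms(1) inner_add_right)
  then have "u' \<bullet> w = 0"
    using hull by (auto simp: inner_add_right)
  moreover have "w \<bullet> w = u' \<bullet> w - c * (u \<bullet> w)"
    by (simp add: w_def inner_diff_left)
  ultimately have "w = 0"
    using uw by simp
  then have "u' = c *\<^sub>R u" by (simp add: w_def)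
  then show ?thesis
    using assms(2,3) by (auto simp: abs_if split: if_splits)
qed

lemma flat_area_eq_measure_prism:
  fixes F :: "'a::euclidean_space set"
  assumes "F \<noteq> {}" "F \<subseteq> {z. u \<bullet> z = b}" "norm u = 1" "aff_dim F = int DIM('a) - 1"
  shows "flat_area F = measure lebesgue (prism F u 1)"
proof -
  define u' where "u' = (SOME u. norm u = 1 \<and> (\<forall>x\<in>F. \<forall>y\<in>F. u \<bullet> (x - y) = 0))"
  have "norm u = 1 \<and> (\<forall>x\<in>F. \<forall>y\<in>F. u \<bullet> (x - y) = 0)"
    using assms(2,3) by (auto simp: inner_diff_right)
  then have u': "norm u' = 1 \<and> (\<forall>x\<in>F. \<forall>y\<in>F. u' \<bullet> (x - y) = 0)"
    unfolding u'_def by (rule someI)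
  have "affine hull F = {z. u \<bullet> z = b}"
    using assms by (intro affine_hull_eq_hyperplane) auto
  then have "u' = u \<or> u' = - u"
    using u' assms(3) by (intro unit_normal_eq_or_uminus) auto
  moreover have "flat_area F = measure lebesgue (prism F u' 1)"
    unfolding flat_area_def Let_def u'_def[symmetric] prism_def
    by (rule arg_cong[where f="measure lebesgue"]) force
  ultimately show ?thesis
    by (auto simp: prism_uminus measure_translation_subtract)
qed

lemma norm_diff_inner_scaleR_pow2:
  fixes z e :: "'a::real_inner"
  assumes "norm e = 1"
  shows "(norm (z - (z \<bullet> e) *\<^sub>R e))\<^sup>2 = (norm z)\<^sup>2 - (z \<bullet> e)\<^sup>2"
  using assms unfolding power2_norm_eq_inner
  by (simp add: inner_diff_left inner_diff_right inner_commute norm_eq_1 power2_eq_square)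

definition cylinder :: "'a::euclidean_space \<Rightarrow> 'a \<Rightarrow> real \<Rightarrow> real \<Rightarrow> real \<Rightarrow> 'a set" where
  "cylinder e p r a b = {z. norm ((z - p) - ((z - p) \<bullet> e) *\<^sub>R e) \<le> r \<and> a \<le> z \<bullet> e \<and> z \<bullet> e \<le> b}"

text \<open>The \<open>(d-1)\<close>-volume of the unit disc orthogonal to \<open>e\<close>.\<close>
definition cylinder_base :: "'a::euclidean_space \<Rightarrow> real" where
  "cylinder_base e = measure lebesgue (cylinder e 0 1 0 1)"

lemma compact_unit_cylinder: "compact (cylinder e 0 1 0 1)"
proof (rule compact_eq_bounded_closed[THEN iffD2], rule conjI)
  have "norm z \<le> 1 + norm e" if "z \<in> cylinder e 0 1 0 1" for z
  proof -
    have "norm z \<le> norm (z - (z \<bullet> e) *\<^sub>R e) + norm ((z \<bullet> e) *\<^sub>R e)"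
      using norm_triangle_sub[of z "(z \<bullet> e) *\<^sub>R e"] by linarith
    also have "\<dots> \<le> 1 + norm e"
      using that by (intro add_mono) (auto simp: cylinder_def mult_left_le_one_le)
    finally show ?thesis .
  qed
  then show "bounded (cylinder e 0 1 0 1)"
    by (intro boundedI) blast
  show "closed (cylinder e 0 1 0 1)"
    unfolding cylinder_def by (intro closed_Collect_conj closed_Collect_le continuous_intros)
qed

lemma cylinder_eq_affine_image:
  fixes e p :: "'a::euclidean_space"
  assumes "norm e = 1" "r > 0" "a < b"
  defines "\<Phi> \<equiv> \<lambda>c. r *\<^sub>R (c + ((c \<bullet> e) * ((b - a) / r - 1)) *\<^sub>R e) + (p - (p \<bullet> e) *\<^sub>R e + a *\<^sub>R e)"
  shows "cylinder e p r a b = \<Phi> ` cylinder e 0 1 0 1"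
proof -
  have ee: "e \<bullet> e = 1" using assms(1) by (simp add: norm_eq_1)
  have \<Phi>: "\<Phi> c = r *\<^sub>R (c - (c \<bullet> e) *\<^sub>R e) + (a + (b - a) * (c \<bullet> e)) *\<^sub>R e + (p - (p \<bullet> e) *\<^sub>R e)" for c
    using assms(2) by (simp add: \<Phi>_def algebra_simps diff_divide_distrib)
  have \<Phi>_e: "\<Phi> c \<bullet> e = a + (b - a) * (c \<bullet> e)" for c
    by (simp add: \<Phi> inner_add_left inner_diff_left ee)
  have \<Phi>_perp: "(\<Phi> c - p) - ((\<Phi> c - p) \<bullet> e) *\<^sub>R e = r *\<^sub>R (c - (c \<bullet> e) *\<^sub>R e)" for c
    by (simp add: \<Phi>_e inner_diff_left) (simp add: \<Phi> algebra_simps)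
  show ?thesis
  proof (intro set_eqI iffI)
    fix z assume z: "z \<in> cylinder e p r a b"
    define c where "c = ((z - p) - ((z - p) \<bullet> e) *\<^sub>R e) /\<^sub>R r + ((z \<bullet> e - a) / (b - a)) *\<^sub>R e"
    have ce: "c \<bullet> e = (z \<bullet> e - a) / (b - a)"
      by (simp add: c_def inner_add_left inner_diff_left ee)
    have perp: "c - (c \<bullet> e) *\<^sub>R e = ((z - p) - ((z - p) \<bullet> e) *\<^sub>R e) /\<^sub>R r"
      unfolding ce by (simp add: c_def)
    have "norm (c - (c \<bullet> e) *\<^sub>R e) = norm ((z - p) - ((z - p) \<bullet> e) *\<^sub>R e) / r"
      using assms(2) unfolding perp by (simp add: divide_inverse_commute)
    also have "\<dots> \<le> 1"
      using z assms(2) by (simp add: cylinder_def)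
    finally have "norm (c - (c \<bullet> e) *\<^sub>R e) \<le> 1" .
    moreover have "0 \<le> c \<bullet> e" "c \<bullet> e \<le> 1"
      using z assms(3) unfolding ce by (simp_all add: cylinder_def field_simps)
    ultimately have "c \<in> cylinder e 0 1 0 1"
      by (simp add: cylinder_def)
    moreover have "\<Phi> c = z"
    proof -
      have "(b - a) * (c \<bullet> e) = z \<bullet> e - a"
        using assms(3) by (simp add: ce)
      moreover have "r *\<^sub>R (c - (c \<bullet> e) *\<^sub>R e) = (z - p) - ((z - p) \<bullet> e) *\<^sub>R e"
        using assms(2) by (simp add: perp)
      ultimately show ?thesis
        by (simp add: \<Phi> algebra_simps)
    qed
    ultimately show "z \<in> \<Phi> ` cylinder e 0 1 0 1"
      by blast
  next
    fix z assume "z \<in> \<Phi> ` cylinder e 0 1 0 1"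
    then obtain c where c: "c \<in> cylinder e 0 1 0 1" "z = \<Phi> c"
      by blast
    have "norm ((z - p) - ((z - p) \<bullet> e) *\<^sub>R e) \<le> r"
      using c assms(2) by (simp add: cylinder_def \<Phi>_perp mult_le_cancel_left1)
    moreover have "(b - a) * (c \<bullet> e) \<le> b - a" "0 \<le> (b - a) * (c \<bullet> e)"
      using c(1) assms(3) by (auto intro: mult_left_le simp: cylinder_def)
    ultimately show "z \<in> cylinder e p r a b"
      by (simp add: cylinder_def c(2) \<Phi>_e)
  qed
qed

lemma
  fixes e p :: "'a::euclidean_space"
  assumes "norm e = 1" "r > 0" "a < b"
  shows compact_cylinder: "compact (cylinder e p r a b)"
    and measure_cylinder: "measure lebesgue (cylinder e p r a b) = cylinder_base e * r ^ (DIM('a) - 1) * (b - a)"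
proof -
  define \<delta> where "\<delta> = p - (p \<bullet> e) *\<^sub>R e + a *\<^sub>R e"
  define M where "M = (\<lambda>w. w + (w \<bullet> e) *\<^sub>R (((b - a) / r - 1) *\<^sub>R e))"
  have eq: "cylinder e p r a b = (\<lambda>x. r *\<^sub>R x + \<delta>) ` M ` cylinder e 0 1 0 1"
    unfolding cylinder_eq_affine_image[OF assms] image_image by (simp add: M_def \<delta>_def)
  have compact_M: "compact (M ` cylinder e 0 1 0 1)"
    unfolding M_def
    by (intro compact_continuous_image compact_unit_cylinder continuous_intros)
  show "compact (cylinder e p r a b)"
    unfolding eq by (rule compact_continuous_image[OF _ compact_M]) (intro continuous_intros)
  have "measure lebesgue (cylinder e p r a b) = r ^ DIM('a) * measure lebesgue (M ` cylinder e 0 1 0 1)"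
    unfolding eq using measure_lebesgue_affine[of r \<delta> "M ` cylinder e 0 1 0 1"] assms(2) by simp
  also have "measure lebesgue (M ` cylinder e 0 1 0 1) = \<bar>1 + (((b - a) / r - 1) *\<^sub>R e) \<bullet> e\<bar> * cylinder_base e"
    unfolding M_def cylinder_base_def by (rule measure_rank_one_image[OF compact_unit_cylinder])
  also have "\<bar>1 + (((b - a) / r - 1) *\<^sub>R e) \<bullet> e\<bar> = (b - a) / r"
    using assms by (simp add: norm_eq_1)
  also have "r ^ DIM('a) = r * r ^ (DIM('a) - 1)"
    by (simp add: power_eq_if[of r "DIM('a)"])
  finally show "measure lebesgue (cylinder e p r a b) = cylinder_base e * r ^ (DIM('a) - 1) * (b - a)"
    using assms(2) by simp
qed

lemma sphere_area_eq: "sphere_area TYPE('a::euclidean_space) = DIM('a) * unit_ball_vol DIM('a)"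
proof -
  let ?v = "unit_ball_vol DIM('a)"
  have "((\<lambda>x. x ^ DIM('a)) has_field_derivative (real DIM('a) * 1 ^ (DIM('a) - Suc 0))) (at 1)"
    by (rule DERIV_pow)
  then have "((\<lambda>h. ((1 + h) ^ DIM('a) - 1 ^ DIM('a)) / h) \<longlongrightarrow> real DIM('a)) (at 0)"
    unfolding DERIV_def by simp
  then have "((\<lambda>h. ((1 + h) ^ DIM('a) - 1) / h * ?v) \<longlongrightarrow> DIM('a) * ?v) (at_right 0)"
    by (intro tendsto_intros) (simp add: filterlim_at_split)
  moreover have "\<forall>\<^sub>F h in at_right 0. ((1 + h) ^ DIM('a) - 1) / h * ?v =
      (measure lebesgue (cball (0::'a) (1 + h)) - measure lebesgue (cball (0::'a) 1)) / h"
    by (rule eventually_at_rightI[of 0 1]) (auto simp: content_cball field_simps)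
  ultimately have "((\<lambda>h. (measure lebesgue (cball (0::'a) (1 + h)) - measure lebesgue (cball (0::'a) 1)) / h)
      \<longlongrightarrow> DIM('a) * ?v) (at_right 0)"
    by (rule Lim_transform_eventually)
  then show ?thesis
    unfolding sphere_area_def by (intro tendsto_Lim) auto
qed

lemma cylinder_subset_cball:
  fixes e :: "'a::euclidean_space"
  assumes "norm e = 1" "r\<^sup>2 + h\<^sup>2 \<le> 1"
  shows "cylinder e 0 r (- h) h \<subseteq> cball 0 1"
proof
  fix z assume z: "z \<in> cylinder e 0 r (- h) h"
  then have "(norm (z - (z \<bullet> e) *\<^sub>R e))\<^sup>2 \<le> r\<^sup>2"
    by (intro power_mono) (auto simp: cylinder_def)
  moreover have "(z \<bullet> e)\<^sup>2 \<le> h\<^sup>2"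
    using z by (auto simp: cylinder_def simp flip: abs_le_square_iff)
  ultimately have "(norm z)\<^sup>2 \<le> 1"
    using norm_diff_inner_scaleR_pow2[OF assms(1), of z] assms(2) by simp
  then show "z \<in> cball 0 1"
    by (simp add: power_le_one_iff)
qed

lemma inverse_sqrt_le_pow_sqrt:
  assumes "n \<ge> 1"
  shows "1 / sqrt n \<le> sqrt (1 - 1 / n) ^ (n - 1)"
proof -
  have "1 / n \<le> (1 + (- 1 / n)) ^ (n - 1)"
    using Bernoulli_inequality[of "- 1 / n" "n - 1"] assms by (simp add: field_simps of_nat_diff)
  also have "\<dots> = ((sqrt (1 - 1 / n))\<^sup>2) ^ (n - 1)"
    using assms by simp
  also have "\<dots> = (sqrt (1 - 1 / n) ^ (n - 1))\<^sup>2"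
    by (simp flip: power_mult) (simp add: mult.commute)
  finally have "sqrt (1 / n) \<le> sqrt ((sqrt (1 - 1 / n) ^ (n - 1))\<^sup>2)"
    by (rule real_sqrt_le_mono)
  then show ?thesis
    using assms by (simp add: real_sqrt_divide)
qed

lemma cylinder_base_le_sphere_area:
  fixes e :: "'a::euclidean_space"
  assumes "DIM('a) \<ge> 2" "norm e = 1"
  shows "2 * cylinder_base e \<le> sphere_area TYPE('a)"
proof -
  \<comment> \<open>Compare with the cylinder of radius \<open>sqrt (1 - 1/d)\<close> and half-height \<open>1 / sqrt d\<close> inscribed
    in the unit ball.\<close>
  define d where "d = DIM('a)"
  have d2: "real d \<ge> 2" using assms(1) by (simp add: d_def)
  define r where "r = sqrt (1 - 1 / d)"
  define h where "h = 1 / sqrt d"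
  have r: "r > 0" and h: "h > 0" "h\<^sup>2 = 1 / d" and "r\<^sup>2 + h\<^sup>2 = 1"
    using d2 by (simp_all add: r_def h_def power_divide)
  then have "measure lebesgue (cylinder e 0 r (- h) h) \<le> measure lebesgue (cball (0::'a) 1)"
    using compact_cylinder[OF assms(2) r, of "- h" h 0] cylinder_subset_cball[OF assms(2)]
    by (intro measure_mono_fmeasurable) (auto intro: fmeasurableD[OF lmeasurable_compact])
  then have inscribed: "cylinder_base e * r ^ (d - 1) * (2 * h) \<le> unit_ball_vol d"
    using measure_cylinder[OF assms(2) r, of "- h" h 0] h(1) by (simp add: content_cball d_def)
  have "2 * cylinder_base e * (1 / d) = cylinder_base e * h * (2 * h)"
    by (simp add: h(2)[symmetric] power2_eq_square)
  also have "\<dots> \<le> cylinder_base e * r ^ (d - 1) * (2 * h)"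
    using inverse_sqrt_le_pow_sqrt[of d] d2 h(1)
    by (intro mult_right_mono mult_left_mono) (auto simp: cylinder_base_def r_def h_def)
  also have "\<dots> \<le> unit_ball_vol d"
    by (rule inscribed)
  finally show ?thesis
    using d2 by (simp add: sphere_area_eq d_def field_simps)
qed

section \<open>Projecting facets of a polytope\<close>

definition facet_normal :: "'a::euclidean_space set \<Rightarrow> 'a set \<Rightarrow> 'a" where
  "facet_normal P F = (SOME u. norm u = 1 \<and> (\<exists>b. P \<subseteq> {z. u \<bullet> z \<le> b} \<and> F = P \<inter> {z. u \<bullet> z = b}))"

definition facet_offset :: "'a::euclidean_space set \<Rightarrow> 'a set \<Rightarrow> real" where
  "facet_offset P F =
     (SOME b. P \<subseteq> {z. facet_normal P F \<bullet> z \<le> b} \<and> F = P \<inter> {z. facet_normal P F \<bullet> z = b})"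

lemma
  fixes P :: "'a::euclidean_space set"
  assumes "polyhedron P" "F facet_of P"
  shows norm_facet_normal: "norm (facet_normal P F) = 1"
    and polyhedron_subset_facet_halfspace: "P \<subseteq> {z. facet_normal P F \<bullet> z \<le> facet_offset P F}"
    and facet_eq_Int_hyperplane: "F = P \<inter> {z. facet_normal P F \<bullet> z = facet_offset P F}"
proof -
  obtain a b where ab: "a \<noteq> 0" "P \<subseteq> {z. a \<bullet> z \<le> b}" "F = P \<inter> {z. a \<bullet> z = b}"
    using facet_of_polyhedron[OF assms] by metis
  have "norm (a /\<^sub>R norm a) = 1 \<and> P \<subseteq> {z. (a /\<^sub>R norm a) \<bullet> z \<le> b / norm a}
      \<and> F = P \<inter> {z. (a /\<^sub>R norm a) \<bullet> z = b / norm a}"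
    using ab by (auto simp: divide_le_cancel field_simps)
  then have "\<exists>u. norm u = 1 \<and> (\<exists>b. P \<subseteq> {z. u \<bullet> z \<le> b} \<and> F = P \<inter> {z. u \<bullet> z = b})"
    by blast
  then have "norm (facet_normal P F) = 1 \<and>
      (\<exists>b. P \<subseteq> {z. facet_normal P F \<bullet> z \<le> b} \<and> F = P \<inter> {z. facet_normal P F \<bullet> z = b})"
    unfolding facet_normal_def by (rule someI_ex)
  then have "norm (facet_normal P F) = 1"
    and "\<exists>b. P \<subseteq> {z. facet_normal P F \<bullet> z \<le> b} \<and> F = P \<inter> {z. facet_normal P F \<bullet> z = b}"
    by auto
  moreover from this(2)
  have "P \<subseteq> {z. facet_normal P F \<bullet> z \<le> facet_offset P F} \<and>
      F = P \<inter> {z. facet_normal P F \<bullet> z = facet_offset P F}"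
    unfolding facet_offset_def by (rule someI_ex)
  ultimately show "norm (facet_normal P F) = 1"
    and "P \<subseteq> {z. facet_normal P F \<bullet> z \<le> facet_offset P F}"
    and "F = P \<inter> {z. facet_normal P F \<bullet> z = facet_offset P F}"
    by auto
qed

lemma facet_subset_hyperplane:
  "polyhedron P \<Longrightarrow> F facet_of P \<Longrightarrow> F \<subseteq> {z. facet_normal P F \<bullet> z = facet_offset P F}"
  by (subst facet_eq_Int_hyperplane) auto

lemma affine_hull_facet:
  fixes P :: "'a::euclidean_space set"
  assumes "polyhedron P" "aff_dim P = DIM('a)" "F facet_of P"
  shows "affine hull F = {z. facet_normal P F \<bullet> z = facet_offset P F}"
  using assms norm_facet_normal[OF assms(1,3)] facet_subset_hyperplane[OF assms(1,3)]
  by (intro affine_hull_eq_hyperplane) (auto simp: facet_of_def)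

lemma compact_facet: "polytope P \<Longrightarrow> F facet_of P \<Longrightarrow> compact F"
  by (meson face_of_imp_compact facet_of_imp_face_of polytope_imp_compact polytope_imp_convex)

lemma measure_facet_prism:
  fixes P :: "'a::euclidean_space set"
  assumes "polytope P" "aff_dim P = DIM('a)" "F facet_of P" "facet_normal P F \<bullet> e \<ge> 0" "T > 0"
  shows "measure lebesgue (prism F e T) = T * (facet_normal P F \<bullet> e) * flat_area F"
proof -
  have P: "polyhedron P" using assms(1) by (rule polytope_imp_polyhedron)
  have "compact F"
    using assms(1,3) by (rule compact_facet)
  then have "measure lebesgue (prism F e T) =
      \<bar>T * (facet_normal P F \<bullet> e)\<bar> * measure lebesgue (prism F (facet_normal P F) 1)"
    using facet_subset_hyperplane[OF P assms(3)] norm_facet_normal[OF P assms(3)] assms(5)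
    by (intro measure_prism_oblique)
  also have "measure lebesgue (prism F (facet_normal P F) 1) = flat_area F"
    using assms(2,3) facet_subset_hyperplane[OF P assms(3)] norm_facet_normal[OF P assms(3)]
    by (intro flat_area_eq_measure_prism[symmetric]) (auto simp: facet_of_def)
  finally show ?thesis
    using assms(4,5) by simp
qed

lemma aff_dim_Int_facets_less:
  fixes P :: "'a::euclidean_space set"
  assumes "convex P" "F facet_of P" "G facet_of P" "F \<noteq> G"
  shows "aff_dim (F \<inter> G) < aff_dim P - 1"
proof -
  have F: "F face_of P" and G: "G face_of P"
    using assms by (auto simp: facet_of_imp_face_of)
  have "\<not> F \<subseteq> G"
  proof
    assume "F \<subseteq> G"
    then have "F face_of G"
      by (metis F G face_of_imp_subset face_of_subset)
    then show False
      using face_of_aff_dim_lt[OF face_of_imp_convex[OF G] _ assms(4)] assms(2,3) by (simp add: facet_of_def)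
  qed
  then have "aff_dim (F \<inter> G) < aff_dim F"
    using face_of_aff_dim_lt[OF face_of_imp_convex[OF F]] face_of_Int_Int[OF F G]
    by (metis F Int_lower1 face_of_subset face_of_imp_subset inf.idem le_iff_inf)
  with assms(2) show ?thesis
    by (simp add: facet_of_def)
qed

lemma negligible_prism_lowdim:
  fixes K :: "'a::euclidean_space set"
  assumes "aff_dim K < int DIM('a) - 1"
  shows "negligible (prism K e T)"
proof (cases "K = {}")
  case True
  then show ?thesis by (simp add: prism_def)
next
  case False
  then obtain k0 where k0: "k0 \<in> K" by blast
  define S where "S = insert e ((+) (- k0) ` K)"
  have "aff_dim K = int (dim ((+) (- k0) ` K))"
    by (rule aff_dim_eq_dim) (rule hull_inc[OF k0])
  moreover have "dim S \<le> dim ((+) (- k0) ` K) + 1"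
    unfolding S_def by (simp add: dim_insert)
  ultimately have "negligible (span S)"
    using assms by (intro negligible_lowdim) simp
  then have "negligible ((+) k0 ` span S)"
    by (rule negligible_translation)
  moreover have "prism K e T \<subseteq> (+) k0 ` span S"
  proof
    fix z assume "z \<in> prism K e T"
    then obtain y t where y: "y \<in> K" "z = y + t *\<^sub>R e"
      by (auto simp: mem_prism)
    then have "(y - k0) + t *\<^sub>R e \<in> span S"
      by (intro span_add span_scale span_base) (auto simp: S_def)
    then show "z \<in> (+) k0 ` span S"
      by (rule rev_image_eqI) (simp add: y)
  qed
  ultimately show ?thesis
    by (rule negligible_subset)
qed

lemma prism_Int_prism_subset:
  assumes "F \<subseteq> P" "G \<subseteq> P"
    and "P \<subseteq> {z. u \<bullet> z \<le> b}" "F \<subseteq> {z. u \<bullet> z = b}" "u \<bullet> e > 0"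
    and "P \<subseteq> {z. v \<bullet> z \<le> c}" "G \<subseteq> {z. v \<bullet> z = c}" "v \<bullet> e > 0"
  shows "prism F e T \<inter> prism G e T \<subseteq> prism (F \<inter> G) e T"
proof
  have below: "t \<le> t'"
    if "y \<in> H" "y' \<in> P" "y + t *\<^sub>R e = y' + t' *\<^sub>R e"
      "H \<subseteq> {z. w \<bullet> z = \<beta>}" "P \<subseteq> {z. w \<bullet> z \<le> \<beta>}" "w \<bullet> e > 0" for H w \<beta> y y' t t'
  proof -
    have "y' = y + (t - t') *\<^sub>R e"
      using that(3) by (simp add: algebra_simps)
    then have "w \<bullet> y' = \<beta> + (t - t') * (w \<bullet> e)"
      using that(1,4) by (auto simp: inner_add_right)
    then show ?thesis
      using that(2,5,6) by (auto simp: mult_le_0_iff)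
  qed
  fix z assume "z \<in> prism F e T \<inter> prism G e T"
  then obtain y t y' t' where y: "y \<in> F" "0 \<le> t" "t \<le> T" "z = y + t *\<^sub>R e"
    and y': "y' \<in> G" "0 \<le> t'" "t' \<le> T" "z = y' + t' *\<^sub>R e"
    by (auto simp: mem_prism)
  have "t \<le> t'"
    using below[of y F y' t t' u b] y y' assms by auto
  moreover have "t' \<le> t"
    using below[of y' G y t' t v c] y y' assms by auto
  ultimately have "y = y'" "t = t'"
    using y(4) y'(4) by auto
  then show "z \<in> prism (F \<inter> G) e T"
    using y y' by (auto simp: mem_prism)
qed

lemma negligible_Int_facet_prisms:
  fixes P :: "'a::euclidean_space set"
  assumes "polyhedron P" "aff_dim P = DIM('a)" "F facet_of P" "G facet_of P" "F \<noteq> G"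
    and "facet_normal P F \<bullet> e > 0" "facet_normal P G \<bullet> e > 0"
  shows "negligible (prism F e T \<inter> prism G e T)"
proof (rule negligible_subset)
  show "prism F e T \<inter> prism G e T \<subseteq> prism (F \<inter> G) e T"
    using facet_of_imp_subset[OF assms(3)] facet_of_imp_subset[OF assms(4)]
      polyhedron_subset_facet_halfspace[OF assms(1,3)] facet_subset_hyperplane[OF assms(1,3)] assms(6)
      polyhedron_subset_facet_halfspace[OF assms(1,4)] facet_subset_hyperplane[OF assms(1,4)] assms(7)
    by (rule prism_Int_prism_subset)
  show "negligible (prism (F \<inter> G) e T)"
    using aff_dim_Int_facets_less[OF polyhedron_imp_convex[OF assms(1)] assms(3-5)] assms(2)
    by (intro negligible_prism_lowdim) simp
qed

lemma measure_Union_facet_prisms: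
  fixes P :: "'a::euclidean_space set"
  assumes "polytope P" "aff_dim P = DIM('a)" "\<F> \<subseteq> {F. F facet_of P}" "T > 0"
    and "\<And>F. F \<in> \<F> \<Longrightarrow> facet_normal P F \<bullet> e > 0"
  shows "measure lebesgue (\<Union>F\<in>\<F>. prism F e T) = T * (\<Sum>F\<in>\<F>. (facet_normal P F \<bullet> e) * flat_area F)"
proof -
  have fin: "finite \<F>"
    using finite_polytope_facets[OF assms(1)] assms(3) by (rule finite_subset[rotated])
  have "measure lebesgue (\<Union>F\<in>\<F>. prism F e T) = (\<Sum>F\<in>\<F>. measure lebesgue (prism F e T))"
  proof (rule measure_negligible_finite_Union_image[OF fin])
    show "prism F e T \<in> lmeasurable" if "F \<in> \<F>" for F
      using that assms(1,3) by (intro lmeasurable_compact compact_prism compact_facet) auto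
    show "pairwise (\<lambda>F G. negligible (prism F e T \<inter> prism G e T)) \<F>"
      using assms polytope_imp_polyhedron[OF assms(1)]
      by (auto simp: pairwise_def intro!: negligible_Int_facet_prisms)
  qed
  also have "\<dots> = T * (\<Sum>F\<in>\<F>. (facet_normal P F \<bullet> e) * flat_area F)"
    using assms by (auto simp: sum_distrib_left measure_facet_prism less_imp_le intro!: sum.cong)
  finally show ?thesis .
qed

lemma cball_subset_cylinder:
  fixes e p :: "'a::euclidean_space"
  assumes "norm e = 1"
  shows "cball p r \<subseteq> cylinder e p r (p \<bullet> e - r) (p \<bullet> e + r)"
proof
  fix z assume "z \<in> cball p r"
  then have z: "norm (z - p) \<le> r"
    by (simp add: dist_norm norm_minus_commute)
  have "(norm ((z - p) - ((z - p) \<bullet> e) *\<^sub>R e))\<^sup>2 \<le> (norm (z - p))\<^sup>2"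
    using norm_diff_inner_scaleR_pow2[OF assms, of "z - p"] by simp
  then have "norm ((z - p) - ((z - p) \<bullet> e) *\<^sub>R e) \<le> r"
    using z by (meson norm_ge_zero order.trans power2_le_imp_le)
  moreover have "\<bar>(z - p) \<bullet> e\<bar> \<le> r"
    using Cauchy_Schwarz_ineq2[of "z - p" e] assms z by simp
  ultimately show "z \<in> cylinder e p r (p \<bullet> e - r) (p \<bullet> e + r)"
    by (auto simp: cylinder_def inner_diff_left)
qed

lemma le_of_forall_pos_mult_le:
  fixes \<sigma> K c :: real
  assumes "\<And>T. T > 0 \<Longrightarrow> T * \<sigma> \<le> K * (c + T)" "0 \<le> K" "0 \<le> c"
  shows "\<sigma> \<le> K"
proof (rule ccontr)
  assume "\<not> \<sigma> \<le> K"
  define T where "T = K * c / (\<sigma> - K) + 1"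
  have "0 \<le> K * c / (\<sigma> - K)"
    using \<open>\<not> \<sigma> \<le> K\<close> assms(2,3) by simp
  then have "T > 0"
    by (simp add: T_def)
  have "T * (\<sigma> - K) = K * c + (\<sigma> - K)"
    using \<open>\<not> \<sigma> \<le> K\<close> by (simp add: T_def field_simps)
  then show False
    using assms(1)[OF \<open>T > 0\<close>] \<open>\<not> \<sigma> \<le> K\<close> by (simp add: algebra_simps)
qed

lemma sum_facet_projections_le:
  fixes P :: "'a::euclidean_space set"
  assumes "polytope P" "aff_dim P = DIM('a)" "\<F> \<subseteq> {F. F facet_of P}"
    and "norm e = 1" "r > 0" "a \<le> b"
    and "\<And>F. F \<in> \<F> \<Longrightarrow> facet_normal P F \<bullet> e > 0"
    and "\<And>F. F \<in> \<F> \<Longrightarrow> F \<subseteq> cylinder e p r a b"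
  shows "(\<Sum>F\<in>\<F>. (facet_normal P F \<bullet> e) * flat_area F) \<le> cylinder_base e * r ^ (DIM('a) - 1)"
proof -
  define \<Sigma> where "\<Sigma> = (\<Sum>F\<in>\<F>. (facet_normal P F \<bullet> e) * flat_area F)"
  define K where "K = cylinder_base e * r ^ (DIM('a) - 1)"
  \<comment> \<open>The prisms of height \<open>T\<close> over the facets in direction \<open>e\<close> do not overlap and lie in a
    cylinder of height \<open>b - a + T\<close>; let \<open>T\<close> tend to infinity.\<close>
  have "T * \<Sigma> \<le> K * (b - a + T)" if "T > 0" for T
  proof -
    have "(\<Union>F\<in>\<F>. prism F e T) \<subseteq> cylinder e p r a (b + T)"
    proof clarify
      fix F z assume "F \<in> \<F>" "z \<in> prism F e T"
      then obtain y t where "y \<in> cylinder e p r a b" "0 \<le> t" "t \<le> T" "z = y + t *\<^sub>R e"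
        using assms(8) by (auto simp: mem_prism)
      then show "z \<in> cylinder e p r a (b + T)"
        using assms(4) by (auto simp: cylinder_def algebra_simps norm_eq_1)
    qed
    moreover have "compact (\<Union>F\<in>\<F>. prism F e T)"
      using finite_polytope_facets[OF assms(1)] assms(1,3)
      by (intro compact_UN compact_prism compact_facet) (auto intro: finite_subset)
    moreover have "compact (cylinder e p r a (b + T))"
      using assms(4-6) that by (intro compact_cylinder) auto
    ultimately have "measure lebesgue (\<Union>F\<in>\<F>. prism F e T) \<le> measure lebesgue (cylinder e p r a (b + T))"
      by (intro measure_mono_fmeasurable) (auto intro: fmeasurableD[OF lmeasurable_compact] lmeasurable_compact)
    then show ?thesis
      using measure_Union_facet_prisms[OF assms(1-3) that assms(7)] measure_cylinder[OF assms(4,5), of a "b + T" p]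
        assms(6) that by (simp add: \<Sigma>_def K_def algebra_simps)
  qed
  then have "\<Sigma> \<le> K"
    by (rule le_of_forall_pos_mult_le) (use assms(5,6) in \<open>auto simp: K_def cylinder_base_def\<close>)
  then show ?thesis
    by (simp add: \<Sigma>_def K_def)
qed

lemma sum_facet_projections_le_sphere_area:
  fixes P :: "'a::euclidean_space set"
  assumes "DIM('a) \<ge> 2" "polytope P" "aff_dim P = DIM('a)" "P \<subseteq> cball 0 1" "norm e = 1"
  shows "(\<Sum>F\<in>{F. F facet_of P \<and> facet_normal P F \<bullet> e > 0}. (facet_normal P F \<bullet> e) * flat_area F)
    \<le> sphere_area TYPE('a) / 2"
proof -
  have "P \<subseteq> cylinder e 0 1 (- 1) 1"
    using assms(4) cball_subset_cylinder[OF assms(5), of 0 1] by simp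
  then have "(\<Sum>F\<in>{F. F facet_of P \<and> facet_normal P F \<bullet> e > 0}. (facet_normal P F \<bullet> e) * flat_area F)
      \<le> cylinder_base e * 1 ^ (DIM('a) - 1)"
    using assms(2,3,5)
    by (intro sum_facet_projections_le[where p = 0 and a = "- 1" and b = 1]) (auto dest: facet_of_imp_subset)
  then show ?thesis
    using cylinder_base_le_sphere_area[OF assms(1,5)] by simp
qed

lemma polytope_surface_area_le:
  fixes P :: "'a::euclidean_space set"
  assumes "DIM('a) \<ge> 2" "polytope P" "aff_dim P = DIM('a)" "P \<subseteq> cball 0 1"
  shows "polytope_surface_area P \<le> DIM('a) * sphere_area TYPE('a)"
proof -
  \<comment> \<open>Unit normals have l1-norm at least 1, so the projections onto the \<open>2 d\<close> directions
    \<open>\<plusminus>b\<close> together cover every facet.\<close>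
  let ?\<F> = "{F. F facet_of P}" and ?\<nu> = "facet_normal P"
  have fin: "finite ?\<F>"
    using assms(2) by (rule finite_polytope_facets)
  have axis: "(\<Sum>F\<in>?\<F>. \<bar>?\<nu> F \<bullet> b\<bar> * flat_area F) \<le> sphere_area TYPE('a)" if "b \<in> Basis" for b
  proof -
    have "(\<Sum>F\<in>?\<F>. \<bar>?\<nu> F \<bullet> b\<bar> * flat_area F) =
        (\<Sum>F\<in>?\<F>. if ?\<nu> F \<bullet> b > 0 then (?\<nu> F \<bullet> b) * flat_area F else 0) +
        (\<Sum>F\<in>?\<F>. if ?\<nu> F \<bullet> (- b) > 0 then (?\<nu> F \<bullet> (- b)) * flat_area F else 0)"
      unfolding sum.distrib[symmetric] by (rule sum.cong) auto
    also have "\<dots> =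
        (\<Sum>F\<in>{F. F facet_of P \<and> ?\<nu> F \<bullet> b > 0}. (?\<nu> F \<bullet> b) * flat_area F) +
        (\<Sum>F\<in>{F. F facet_of P \<and> ?\<nu> F \<bullet> (- b) > 0}. (?\<nu> F \<bullet> (- b)) * flat_area F)"
      by (simp only: sum.inter_filter[OF fin, symmetric]) simp
    also have "\<dots> \<le> sphere_area TYPE('a) / 2 + sphere_area TYPE('a) / 2"
      using that by (intro add_mono sum_facet_projections_le_sphere_area assms) auto
    finally show ?thesis by simp
  qed
  have "polytope_surface_area P \<le> (\<Sum>F\<in>?\<F>. (\<Sum>b\<in>Basis. \<bar>?\<nu> F \<bullet> b\<bar>) * flat_area F)"
    unfolding polytope_surface_area_def
  proof (rule sum_mono)
    fix F assume "F \<in> ?\<F>"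
    then have "1 \<le> (\<Sum>b\<in>Basis. \<bar>?\<nu> F \<bullet> b\<bar>)"
      using norm_le_l1[of "?\<nu> F"] norm_facet_normal[OF polytope_imp_polyhedron[OF assms(2)]] by simp
    then show "flat_area F \<le> (\<Sum>b\<in>Basis. \<bar>?\<nu> F \<bullet> b\<bar>) * flat_area F"
      using flat_area_nonneg[of F] by (simp add: mult_le_cancel_right1)
  qed
  also have "\<dots> = (\<Sum>b\<in>Basis. \<Sum>F\<in>?\<F>. \<bar>?\<nu> F \<bullet> b\<bar> * flat_area F)"
    by (simp add: sum_distrib_right sum.swap[of _ ?\<F>])
  also have "\<dots> \<le> DIM('a) * sphere_area TYPE('a)"
    using sum_mono[OF axis] by simp
  finally show ?thesis .
qed

section \<open>Facets with small caps\<close>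

lemma cap_height_ge:
  fixes P F :: "'a::euclidean_space set"
  assumes "norm u = 1" "affine hull F = {z. u \<bullet> z = b}" "P \<subseteq> {z. u \<bullet> z \<le> b}"
    and "F \<noteq> {}" "F \<subseteq> cball 0 1" "b \<le> 1"
  shows "1 - b \<le> cap_height P F"
proof -
  define A where "A = {infdist x (affine hull F) | x. x \<in> cball 0 1 \<inter> outer_halfspace P F}"
  have uu: "u \<bullet> u = 1" using assms(1) by (simp add: norm_eq_1)
  obtain y0 where y0: "y0 \<in> F" using assms(4) by blast
  have ne: "affine hull F \<noteq> {}"
    using hull_inc[OF y0] by blast
  \<comment> \<open>The normal \<open>u\<close> is a point of the cap at distance \<open>1 - b\<close> from the hyperplane.\<close>
  have "u \<in> outer_halfspace P F"
    unfolding outer_halfspace_def using assms(1-3,6) uu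
    by (intro CollectI exI[of _ u] exI[of _ b]) auto
  then have "infdist u (affine hull F) \<in> A"
    using assms(1) by (auto simp: A_def)
  moreover have "bdd_above A"
  proof (rule bdd_aboveI)
    fix d assume "d \<in> A"
    then obtain x where x: "d = infdist x (affine hull F)" "norm x \<le> 1"
      by (auto simp: A_def)
    have "d \<le> dist x y0"
      using x(1) infdist_le[OF hull_inc[OF y0]] by simp
    also have "\<dots> \<le> norm x + norm y0"
      by (simp add: dist_norm norm_triangle_ineq4)
    also have "\<dots> \<le> 2"
      using x(2) y0 assms(5) by auto
    finally show "d \<le> 2" .
  qed
  ultimately have "infdist u (affine hull F) \<le> cap_height P F"
    unfolding cap_height_def A_def[symmetric] by (rule cSup_upper)
  moreover have "1 - b \<le> infdist u (affine hull F)"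
    unfolding infdist_notempty[OF ne]
  proof (rule cINF_greatest[OF ne])
    fix a assume "a \<in> affine hull F"
    then have "1 - b = u \<bullet> (u - a)"
      using assms(2) by (auto simp: inner_diff_right uu)
    also have "\<dots> \<le> dist u a"
      using norm_cauchy_schwarz[of u "u - a"] assms(1) by (simp add: dist_norm)
    finally show "1 - b \<le> dist u a" .
  qed
  ultimately show ?thesis
    by linarith
qed

lemma facet_offset_le_cap_height:
  fixes P :: "'a::euclidean_space set"
  assumes "polytope P" "aff_dim P = DIM('a)" "P \<subseteq> cball 0 1" "F facet_of P"
  shows "facet_offset P F \<le> 1" "1 - facet_offset P F \<le> cap_height P F"
proof -
  have P: "polyhedron P"
    using assms(1) by (rule polytope_imp_polyhedron)
  obtain y where y: "y \<in> F"
    using assms(4) by (auto simp: facet_of_def)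
  then have "y \<in> cball 0 1"
    using assms(3,4) facet_of_imp_subset by blast
  then have "facet_normal P F \<bullet> y \<le> 1"
    using norm_cauchy_schwarz[of "facet_normal P F" y] norm_facet_normal[OF P assms(4)] by simp
  then show "facet_offset P F \<le> 1"
    using y facet_subset_hyperplane[OF P assms(4)] by auto
  then show "1 - facet_offset P F \<le> cap_height P F"
    using y assms(3) facet_of_imp_subset[OF assms(4)]
    by (intro cap_height_ge[OF norm_facet_normal[OF P assms(4)] affine_hull_facet[OF P assms(2,4)]
        polyhedron_subset_facet_halfspace[OF P assms(4)]]) auto
qed

lemma norm_diff_pow2_le_of_same_level:
  fixes u x y :: "'a::real_inner"
  assumes "norm u = 1" "u \<bullet> y = u \<bullet> x" "norm x = 1" "norm y \<le> 1"
  shows "(norm (y - x))\<^sup>2 \<le> 8 * (1 - u \<bullet> x)"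
proof -
  define \<beta> where "\<beta> = u \<bullet> x"
  have x: "(norm (x - \<beta> *\<^sub>R u))\<^sup>2 = 1 - \<beta>\<^sup>2"
    using norm_diff_inner_scaleR_pow2[OF assms(1), of x] assms(3) by (simp add: \<beta>_def inner_commute)
  have "(norm y)\<^sup>2 \<le> 1"
    using assms(4) by (simp add: power_le_one)
  then have y: "(norm (y - \<beta> *\<^sub>R u))\<^sup>2 \<le> 1 - \<beta>\<^sup>2"
    using norm_diff_inner_scaleR_pow2[OF assms(1), of y] assms(2) by (simp add: \<beta>_def inner_commute)
  have parallelogram: "(norm (a - c))\<^sup>2 \<le> 2 * (norm a)\<^sup>2 + 2 * (norm c)\<^sup>2" for a c :: 'a
    using inner_ge_zero[of "a + c"]
    by (simp add: power2_norm_eq_inner inner_add_left inner_add_right inner_diff_left inner_diff_right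
        inner_commute)
  have "\<bar>\<beta>\<bar> \<le> 1"
    using Cauchy_Schwarz_ineq2[of u x] assms(1,3) by (simp add: \<beta>_def)
  have "(norm (y - x))\<^sup>2 = (norm ((y - \<beta> *\<^sub>R u) - (x - \<beta> *\<^sub>R u)))\<^sup>2"
    by simp
  also have "\<dots> \<le> 2 * (norm (y - \<beta> *\<^sub>R u))\<^sup>2 + 2 * (norm (x - \<beta> *\<^sub>R u))\<^sup>2"
    by (rule parallelogram)
  also have "\<dots> \<le> 4 * (1 - \<beta>) * (1 + \<beta>)"
    using x y by (simp add: power2_eq_square algebra_simps)
  also have "\<dots> \<le> 4 * (1 - \<beta>) * 2"
    using \<open>\<bar>\<beta>\<bar> \<le> 1\<close> by (intro mult_left_mono) auto
  finally show ?thesis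
    by (simp add: \<beta>_def)
qed

lemma small_cap_facet_near_vertex:
  fixes P :: "'a::euclidean_space set"
  assumes "polytope P" "aff_dim P = DIM('a)" "P \<subseteq> cball 0 1"
    and "F facet_of P" "x \<in> F" "norm x = 1" "cap_height P F \<le> t"
  shows "1 - t \<le> facet_normal P F \<bullet> x" and "F \<subseteq> cball x (sqrt (8 * t))"
proof -
  have P: "polyhedron P"
    using assms(1) by (rule polytope_imp_polyhedron)
  have level: "facet_normal P F \<bullet> y = facet_offset P F" if "y \<in> F" for y
    using that facet_subset_hyperplane[OF P assms(4)] by blast
  then show "1 - t \<le> facet_normal P F \<bullet> x"
    using facet_offset_le_cap_height(2)[OF assms(1-4)] assms(5,7) by simp
  show "F \<subseteq> cball x (sqrt (8 * t))"
  proof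
    fix y assume "y \<in> F"
    then have "(norm (y - x))\<^sup>2 \<le> 8 * (1 - facet_normal P F \<bullet> x)"
      using level assms(3-6) norm_facet_normal[OF P assms(4)] facet_of_imp_subset[OF assms(4)]
      by (intro norm_diff_pow2_le_of_same_level) auto
    also have "\<dots> \<le> 8 * t"
      using \<open>1 - t \<le> facet_normal P F \<bullet> x\<close> by simp
    finally show "y \<in> cball x (sqrt (8 * t))"
      by (auto simp: dist_norm norm_minus_commute intro: real_le_rsqrt)
  qed
qed

lemma sum_small_cap_facets_at_vertex_le:
  fixes P :: "'a::euclidean_space set"
  assumes "DIM('a) \<ge> 2" "polytope P" "aff_dim P = DIM('a)" "P \<subseteq> cball 0 1"
    and "norm x = 1" "0 < t" "t \<le> 1/8"
  shows "(\<Sum>F\<in>{F. F facet_of P \<and> x \<in> F \<and> cap_height P F \<le> t}. flat_area F)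
    \<le> sphere_area TYPE('a) * sqrt (8 * t) ^ (DIM('a) - 1)"
proof -
  let ?\<G> = "{F. F facet_of P \<and> x \<in> F \<and> cap_height P F \<le> t}" and ?\<nu> = "facet_normal P"
  define \<rho> where "\<rho> = sqrt (8 * t)"
  have near: "1/2 \<le> ?\<nu> F \<bullet> x" "F \<subseteq> cylinder x x \<rho> (x \<bullet> x - \<rho>) (x \<bullet> x + \<rho>)" if "F \<in> ?\<G>" for F
    using that small_cap_facet_near_vertex[OF assms(2-4), of F x t] cball_subset_cylinder[OF assms(5)] assms(5,7)
    by (auto simp: \<rho>_def)
  \<comment> \<open>Since \<open>\<nu> \<bullet> x \<ge> 1/2\<close>, projecting these facets along \<open>x\<close> loses at most a factor 2.\<close>
  have "(\<Sum>F\<in>?\<G>. flat_area F) \<le> 2 * (\<Sum>F\<in>?\<G>. (?\<nu> F \<bullet> x) * flat_area F)"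
    unfolding sum_distrib_left
  proof (rule sum_mono)
    fix F assume "F \<in> ?\<G>"
    then have "1 * flat_area F \<le> (2 * (?\<nu> F \<bullet> x)) * flat_area F"
      using near(1)[OF \<open>F \<in> ?\<G>\<close>] by (intro mult_right_mono flat_area_nonneg) auto
    then show "flat_area F \<le> 2 * ((?\<nu> F \<bullet> x) * flat_area F)"
      by (simp add: mult.assoc)
  qed
  also have "\<dots> \<le> 2 * (cylinder_base x * \<rho> ^ (DIM('a) - 1))"
    using near assms(2,3,5,6)
    by (intro mult_left_mono sum_facet_projections_le[where p = x and a = "x \<bullet> x - \<rho>" and b = "x \<bullet> x + \<rho>"])
      (force simp: \<rho>_def)+
  also have "\<dots> \<le> sphere_area TYPE('a) * \<rho> ^ (DIM('a) - 1)"
    using cylinder_base_le_sphere_area[OF assms(1,5)] assms(6) by (simp add: \<rho>_def)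
  finally show ?thesis
    by (simp add: \<rho>_def)
qed

lemma sqrt_powr_pow:
  fixes q :: real
  assumes "q > 0" "n > 0"
  shows "sqrt (q powr (2 / n)) ^ n = q"
proof -
  have "sqrt (q powr (2 / n)) = q powr (1 / n)"
    using assms by (simp add: powr_half_sqrt[symmetric] powr_powr)
  then show ?thesis
    using assms by (simp add: powr_realpow[symmetric] powr_powr)
qed

lemma sum_le_sum_incidences:
  fixes f :: "'b set \<Rightarrow> real"
  assumes "finite X" "finite \<F>" "\<And>F. F \<in> \<F> \<Longrightarrow> \<exists>x\<in>X. x \<in> F" "\<And>F. F \<in> \<F> \<Longrightarrow> 0 \<le> f F"
  shows "(\<Sum>F\<in>\<F>. f F) \<le> (\<Sum>x\<in>X. \<Sum>F\<in>{F\<in>\<F>. x \<in> F}. f F)"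
proof -
  have "(\<Sum>F\<in>\<F>. f F) \<le> (\<Sum>F\<in>\<F>. \<Sum>x\<in>{x\<in>X. x \<in> F}. f F)"
  proof (rule sum_mono)
    fix F assume "F \<in> \<F>"
    then have "1 \<le> card {x\<in>X. x \<in> F}"
      using assms(1,3) by (simp add: Suc_le_eq card_gt_0_iff) blast
    then show "f F \<le> (\<Sum>x\<in>{x\<in>X. x \<in> F}. f F)"
      using assms(4)[OF \<open>F \<in> \<F>\<close>] by (simp add: mult_le_cancel_right1)
  qed
  also have "\<dots> = (\<Sum>x\<in>X. \<Sum>F\<in>{F\<in>\<F>. x \<in> F}. f F)"
    by (rule sum.swap_restrict[OF assms(2,1)])
  finally show ?thesis .
qed

lemma sum_facets_le_polytope_surface_area:
  "polytope P \<Longrightarrow> (\<Sum>F\<in>{F. F facet_of P \<and> Q F}. flat_area F) \<le> polytope_surface_area P"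
  unfolding polytope_surface_area_def
  by (intro sum_mono2 finite_polytope_facets) (auto simp: flat_area_nonneg)

lemma convex_hull_subset_cball:
  fixes c :: "'a::real_normed_vector"
  shows "X \<subseteq> sphere c r \<Longrightarrow> convex hull X \<subseteq> cball c r"
  by (intro hull_minimal) auto

lemma polytope_surface_area_convex_hull_le:
  fixes X :: "'a::euclidean_space set"
  assumes "DIM('a) \<ge> 2" "finite X" "X \<subseteq> sphere 0 1" "aff_dim (convex hull X) = DIM('a)"
  shows "polytope_surface_area (convex hull X) \<le> card X * sphere_area TYPE('a)"
proof -
  have "polytope_surface_area (convex hull X) \<le> DIM('a) * sphere_area TYPE('a)"
    using assms by (intro polytope_surface_area_le polytope_convex_hull convex_hull_subset_cball)
  also have "\<dots> \<le> card X * sphere_area TYPE('a)"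
    using aff_dim_le_card[OF assms(2)] assms(4)
    by (intro mult_right_mono) (auto simp: aff_dim_convex_hull sphere_area_eq)
  finally show ?thesis .
qed

lemma sum_small_cap_facets_le:
  fixes X :: "'a::euclidean_space set"
  assumes "DIM('a) \<ge> 2" "finite X" "X \<subseteq> sphere 0 1" "aff_dim (convex hull X) = DIM('a)"
    and "\<And>F. F facet_of convex hull X \<Longrightarrow> \<exists>x\<in>X. x \<in> F" "0 < t" "t \<le> 1/8"
  shows "(\<Sum>F\<in>{F. F facet_of convex hull X \<and> cap_height (convex hull X) F \<le> t}. flat_area F)
    \<le> card X * sphere_area TYPE('a) * sqrt (8 * t) ^ (DIM('a) - 1)"
proof -
  let ?P = "convex hull X"
  have P: "polytope ?P" "?P \<subseteq> cball 0 1"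
    using assms(2,3) by (simp_all add: polytope_convex_hull convex_hull_subset_cball)
  have "(\<Sum>F\<in>{F. F facet_of ?P \<and> cap_height ?P F \<le> t}. flat_area F)
      \<le> (\<Sum>x\<in>X. \<Sum>F\<in>{F. F facet_of ?P \<and> x \<in> F \<and> cap_height ?P F \<le> t}. flat_area F)"
    using sum_le_sum_incidences[OF assms(2), of "{F. F facet_of ?P \<and> cap_height ?P F \<le> t}" flat_area]
      finite_polytope_facets[OF P(1)] assms(5)
    by (simp add: flat_area_nonneg conj_commute conj_left_commute)
  also have "\<dots> \<le> (\<Sum>x\<in>X. sphere_area TYPE('a) * sqrt (8 * t) ^ (DIM('a) - 1))"
    using assms(1,3,4,6,7) P by (intro sum_mono sum_small_cap_facets_at_vertex_le) auto
  finally show ?thesis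
    by simp
qed

theorem lemma8:
  fixes X :: "'a::euclidean_space set" and P :: "'a set"
  assumes "DIM('a) \<ge> 2"
    and "finite X" and "X \<subseteq> sphere 0 1"
    and "P = convex hull X"
    and "interior P \<noteq> {}"
    and "\<forall>F. F facet_of P \<longrightarrow>
           (\<exists>S. S \<subseteq> X \<and> card S = DIM('a) \<and> \<not> affine_dependent S \<and> F = convex hull S)"
  shows "(\<Sum>F\<in>{F. F facet_of P \<and>
              cap_height P F \<le> 1/8 * ((polytope_surface_area P / sphere_area TYPE('a))
                                        * (1 / (4 * real (card X)))) powr (2 / (real DIM('a) - 1))}.
            flat_area F)
         \<le> 1/4 * polytope_surface_area P"
proof -
  define S where "S = polytope_surface_area P"
  define q where "q = S / sphere_area TYPE('a) * (1 / (4 * real (card X)))"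
  define t where "t = 1/8 * q powr (2 / (real DIM('a) - 1))"
  have full: "aff_dim (convex hull X) = DIM('a)"
    using aff_dim_nonempty_interior[OF assms(5)] assms(4) by simp
  have vertex: "\<exists>x\<in>X. x \<in> F" if "F facet_of convex hull X" for F
    using assms(1,4,6) that by (metis all_not_in_conv card.empty hull_inc not_numeral_le_zero subsetD)
  have "(\<Sum>F\<in>{F. F facet_of P \<and> cap_height P F \<le> t}. flat_area F) \<le> S"
    unfolding S_def using assms(2,4) by (simp add: sum_facets_le_polytope_surface_area polytope_convex_hull)
  moreover have "(\<Sum>F\<in>{F. F facet_of P \<and> cap_height P F \<le> t}. flat_area F) \<le> 1/4 * S" if "S > 0"
  proof -
    have "S \<le> card X * sphere_area TYPE('a)" and \<omega>: "sphere_area TYPE('a) > 0"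
      using polytope_surface_area_convex_hull_le[OF assms(1-3) full] assms(4)
      by (simp_all add: S_def sphere_area_eq)
    then have n: "card X > 0"
      using that by (cases "card X = 0") auto
    have "0 < q" "q \<le> 1/4"
      using that \<omega> n \<open>S \<le> card X * sphere_area TYPE('a)\<close> by (simp_all add: q_def field_simps)
    then have "0 < t" "t \<le> 1/8" "sqrt (8 * t) ^ (DIM('a) - 1) = q"
      using assms(1) sqrt_powr_pow[of q "DIM('a) - 1"] by (simp_all add: t_def powr_le1)
    then have "(\<Sum>F\<in>{F. F facet_of P \<and> cap_height P F \<le> t}. flat_area F) \<le> card X * sphere_area TYPE('a) * q"
      using sum_small_cap_facets_le[OF assms(1-3) full vertex, of t] unfolding assms(4) by simp
    also have "\<dots> = 1/4 * S"
      using \<omega> n by (simp add: q_def)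
    finally show ?thesis .
  qed
  ultimately show ?thesis
    by (cases "S > 0") (simp_all add: S_def q_def t_def)
qed

end
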